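(* Let $f(\cdot;w)$ be a ReLU multilayer perceptron on $\mathbb{R}^{n_0}$ with parameter vector $w\in\mathbb{R}^p$ (fixed architecture $n_0,n_1,\dots,n_{L+1}$, $L\ge 1$). Then there exists a set $B\subset\mathbb{R}^p$ of Lebesgue measure zero such that for every $w_0\in\mathbb{R}^p\setminus B$ there is a set $Z\subset\mathbb{R}^{n_0}$ of Lebesgue measure zero with the following property: for every $x\in\mathbb{R}^{n_0}\setminus Z$ there exists $\varepsilon>0$ such that for all $w\in\mathbb{R}^p$ with $\|w-w_0\|<\varepsilon$ one has $\mathrm{act}(x;w)=\mathrm{act}(x;w_0)$.
   Context: A ReLU multilayer perceptron (MLP) with $L$ hidden layers and widths $n_0,n_1,\dots,n_L,n_{L+1}$ has parameters $w=(W_0,b_0,W_1,b_1,\dots,W_L,b_L)\in\mathbb{R}^p$ with $W_l\in\mathbb{R}^{n_{l+1}\times n_l}$, $b_l\in\mathbb{R}^{n_{l+1}}$ (all entries concatenated into one vector of length $p$). For $x\in\mathbb{R}^{n_0}$ set $h_0(x;w)=x$ and for $l=1,\dots,L$ define the pre-activations $z_l(x;w)=W_{l-1}h_{l-1}(x;w)+b_{l-1}\in\mathbb{R}^{n_l}$ and activations $h_l(x;w)=\sigma(z_l(x;w))$, where $\sigma(t)=\max(t,0)$ is applied elementwise; the output is $f(x;w)=W_Lh_L(x;w)+b_L\in\mathbb{R}^{n_{L+1}}$. The activation pattern of $x$ under $w$ is $\mathrm{act}(x;w)=(\mathrm{act}_1(x;w),\dots,\mathrm{act}_L(x;w))$ where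 $\mathrm{act}_l(x;w)=\mathbf{1}\{z_l(x;w)>0\}\in\{0,1\}^{n_l}$ (componentwise indicator). Measure means Lebesgue measure; $\|\cdot\|$ is any norm on $\mathbb{R}^p$. *)

theory Defs
  imports "HOL-Probability.Probability"
begin

text \<open>Architecture: a list ns = [n_0, n_1, ..., n_L, n_(L+1)] of widths, L = length ns - 2.
  Parameters are a flat vector w in R^p, represented as a function nat => real whose
  coordinates 0..p-1 are used. The concatenation order is W_0, b_0, W_1, b_1, ..., W_L, b_L,
  each matrix W_l (n_(l+1) x n_l) stored row-major.\<close>

definition mlp_depth :: "nat list \<Rightarrow> nat" where
  "mlp_depth ns = length ns - 2"

definition layer_size :: "nat list \<Rightarrow> nat \<Rightarrow> nat" where
  "layer_size ns l = ns ! (Suc l) * ns ! l + ns ! (Suc l)"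

definition layer_offset :: "nat list \<Rightarrow> nat \<Rightarrow> nat" where
  "layer_offset ns l = (\<Sum>k<l. layer_size ns k)"

definition num_params :: "nat list \<Rightarrow> nat" where
  "num_params ns = layer_offset ns (Suc (mlp_depth ns))"

definition weight :: "nat list \<Rightarrow> (nat \<Rightarrow> real) \<Rightarrow> nat \<Rightarrow> nat \<Rightarrow> nat \<Rightarrow> real" where
  "weight ns w l i j = w (layer_offset ns l + i * ns ! l + j)"

definition bias :: "nat list \<Rightarrow> (nat \<Rightarrow> real) \<Rightarrow> nat \<Rightarrow> nat \<Rightarrow> real" where
  "bias ns w l i = w (layer_offset ns l + ns ! (Suc l) * ns ! l + i)"

fun hidden :: "nat list \<Rightarrow> (nat \<Rightarrow> real) \<Rightarrow> (nat \<Rightarrow> real) \<Rightarrow> nat \<Rightarrow> nat \<Rightarrow> real"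
and preact :: "nat list \<Rightarrow> (nat \<Rightarrow> real) \<Rightarrow> (nat \<Rightarrow> real) \<Rightarrow> nat \<Rightarrow> nat \<Rightarrow> real" where
  "hidden ns x w 0 = x"
| "hidden ns x w (Suc l) = (\<lambda>i. max (preact ns x w l i) 0)"
| "preact ns x w l = (\<lambda>i. (\<Sum>j<ns ! l. weight ns w l i j * hidden ns x w l j) + bias ns w l i)"

text \<open>Note: preact ns x w l is z_(l+1). The network output f(x;w) = W_L h_L + b_L.\<close>
definition mlp_output :: "nat list \<Rightarrow> (nat \<Rightarrow> real) \<Rightarrow> (nat \<Rightarrow> real) \<Rightarrow> nat \<Rightarrow> real" where
  "mlp_output ns x w = preact ns x w (mlp_depth ns)"

text \<open>Activation pattern: act l i = [z_l(x;w)_i > 0] for 1 <= l <= L, i < n_l;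
  out-of-range indices are set to False, so equality of these functions is equality
  of the tuples (act_1, ..., act_L).\<close>
definition act :: "nat list \<Rightarrow> (nat \<Rightarrow> real) \<Rightarrow> (nat \<Rightarrow> real) \<Rightarrow> nat \<Rightarrow> nat \<Rightarrow> bool" where
  "act ns x w = (\<lambda>l i. 1 \<le> l \<and> l \<le> mlp_depth ns \<and> i < ns ! l \<and> preact ns x w (l - 1) i > 0)"

text \<open>Lebesgue measure on R^n, with R^n represented as extensional functions on {..<n}.\<close>
definition lebesgue_n :: "nat \<Rightarrow> (nat \<Rightarrow> real) measure" where
  "lebesgue_n n = completion (Pi\<^sub>M {..<n} (\<lambda>_. lborel))"

definition norm_n :: "nat \<Rightarrow> (nat \<Rightarrow> real) \<Rightarrow> real" where
  "norm_n n v = sqrt (\<Sum>i<n. (v i)\<^sup>2)"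

end

theory Submission
  imports Defs
begin

text \<open>For a fixed input x, the pre-activation of a hidden unit is, as a function of the parameters,
  its own bias plus a term not depending on that bias, so it vanishes only on a null set of
  parameters. By Fubini, for almost every w0 it is then non-zero for almost every x, for all
  (finitely many) hidden units at once. Pre-activations are continuous in w, so at such (w0, x)
  their signs, i.e. the activation pattern, are constant near w0.\<close>

lemma layer_offset_Suc: "layer_offset ns (Suc l) = layer_offset ns l + layer_size ns l"
  by (simp add: layer_offset_def)

lemma layer_offset_mono: "l \<le> l' \<Longrightarrow> layer_offset ns l \<le> layer_offset ns l'"
  unfolding layer_offset_def by (intro sum_mono2) auto

lemma row_major_index_less:
  fixes i j m n :: nat
  assumes "i < m" "j < n"
  shows "i * n + j < m * n"
proof -
  have "i * n + j < Suc i * n" using assms(2) by simp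
  also have "\<dots> \<le> m * n" using assms(1) by (intro mult_right_mono) auto
  finally show ?thesis .
qed

definition bias_index :: "nat list \<Rightarrow> nat \<Rightarrow> nat \<Rightarrow> nat" where
  "bias_index ns l i = layer_offset ns l + ns ! Suc l * ns ! l + i"

lemma bias_eq_bias_index: "bias ns w l i = w (bias_index ns l i)"
  by (simp add: bias_def bias_index_def)

lemma bias_index_less_num_params:
  assumes "l < mlp_depth ns" "i < ns ! Suc l"
  shows "bias_index ns l i < num_params ns"
proof -
  have "bias_index ns l i < layer_offset ns (Suc l)"
    using assms by (simp add: bias_index_def layer_offset_Suc layer_size_def)
  also have "\<dots> \<le> num_params ns"
    unfolding num_params_def using assms by (intro layer_offset_mono) simp
  finally show ?thesis .
qed

lemma hidden_params_cong:
  assumes "\<And>k. k < layer_offset ns l \<Longrightarrow> w k = w' k" "j < ns ! l"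
  shows "hidden ns x w l j = hidden ns x w' l j"
  using assms
proof (induction l arbitrary: j)
  case 0
  then show ?case by simp
next
  case (Suc l)
  have params: "w k = w' k" if "k < layer_offset ns (Suc l)" for k
    using Suc.prems(1) that .
  have "hidden ns x w l k = hidden ns x w' l k" if "k < ns ! l" for k
    using Suc.IH[OF _ that] params layer_offset_mono[of l "Suc l" ns] by fastforce
  moreover have "weight ns w l j k = weight ns w' l j k" if "k < ns ! l" for k
    unfolding weight_def using row_major_index_less[OF Suc.prems(2) that]
    by (intro params) (simp add: layer_offset_Suc layer_size_def)
  moreover have "bias ns w l j = bias ns w' l j"
    unfolding bias_def using Suc.prems(2)
    by (intro params) (simp add: layer_offset_Suc layer_size_def)
  ultimately show ?case by simp
qed

lemma preact_fun_upd_bias: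
  assumes "i < ns ! Suc l"
  shows "preact ns x (w(bias_index ns l i := y)) l i =
         preact ns x w l i - w (bias_index ns l i) + y"
proof -
  let ?c = "bias_index ns l i"
  have "hidden ns x (w(?c := y)) l j = hidden ns x w l j" if "j < ns ! l" for j
    by (rule hidden_params_cong[OF _ that]) (simp add: bias_index_def)
  moreover have "weight ns (w(?c := y)) l i j = weight ns w l i j" if "j < ns ! l" for j
    using row_major_index_less[OF assms that] by (simp add: weight_def bias_index_def)
  ultimately show ?thesis by (simp add: bias_eq_bias_index)
qed

lemma measurable_PiM_coordinate:
  "(\<lambda>w::nat \<Rightarrow> real. w k) \<in> borel_measurable (PiM I (\<lambda>_. lborel))"
proof (cases "k \<in> I")
  case True
  then show ?thesis by simp
next
  case False
  have "(\<lambda>w::nat \<Rightarrow> real. w k) \<in> borel_measurable (PiM I (\<lambda>_. lborel)) \<longleftrightarrow>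
      (\<lambda>_::nat \<Rightarrow> real. undefined :: real) \<in> borel_measurable (PiM I (\<lambda>_. lborel))"
    by (intro measurable_cong) (use False in \<open>auto simp: space_PiM PiE_def extensional_def\<close>)
  then show ?thesis by simp
qed

lemma borel_measurable_hidden:
  assumes "\<And>j. (\<lambda>z. X z j) \<in> borel_measurable M" "\<And>j. (\<lambda>z. W z j) \<in> borel_measurable M"
  shows "(\<lambda>z. hidden ns (X z) (W z) l i) \<in> borel_measurable M"
proof (induction l arbitrary: i)
  case 0
  then show ?case using assms(1) by simp
next
  case (Suc l)
  show ?case
    unfolding hidden.simps preact.simps weight_def bias_def
    by (intro borel_measurable_max borel_measurable_sum borel_measurable_add
        borel_measurable_times assms(2) Suc borel_measurable_const)
qed

lemma borel_measurable_preact: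
  assumes "\<And>j. (\<lambda>z. X z j) \<in> borel_measurable M" "\<And>j. (\<lambda>z. W z j) \<in> borel_measurable M"
  shows "(\<lambda>z. preact ns (X z) (W z) l i) \<in> borel_measurable M"
  unfolding preact.simps weight_def bias_def
  by (intro borel_measurable_sum borel_measurable_add borel_measurable_times
      assms(2) borel_measurable_hidden[OF assms])

lemma tendsto_hidden:
  assumes "\<And>j. ((\<lambda>w. w j) \<longlongrightarrow> w0 j) F"
  shows "((\<lambda>w. hidden ns x w l i) \<longlongrightarrow> hidden ns x w0 l i) F"
proof (induction l arbitrary: i)
  case 0
  then show ?case by simp
next
  case (Suc l)
  show ?case
    unfolding hidden.simps preact.simps weight_def bias_def
    by (intro tendsto_max tendsto_sum tendsto_add tendsto_mult assms Suc tendsto_const)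
qed

lemma tendsto_preact:
  assumes "\<And>j. ((\<lambda>w. w j) \<longlongrightarrow> w0 j) F"
  shows "((\<lambda>w. preact ns x w l i) \<longlongrightarrow> preact ns x w0 l i) F"
  unfolding preact.simps weight_def bias_def
  by (intro tendsto_sum tendsto_add tendsto_mult assms tendsto_hidden)

lemma (in product_sigma_finite) AE_PiM_insert_by_slices:
  assumes "finite I" "c \<notin> I"
    and meas: "{v \<in> space (PiM (insert c I) M). \<not> P v} \<in> sets (PiM (insert c I) M)"
    and slices: "\<And>v. v \<in> space (PiM I M) \<Longrightarrow> AE y in M c. P (v(c := y))"
  shows "AE v in PiM (insert c I) M. P v"
proof -
  let ?S = "{v \<in> space (PiM (insert c I) M). \<not> P v}"
  have slice_null: "(\<integral>\<^sup>+ y. indicator ?S (v(c := y)) \<partial>M c) = 0"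
    if v: "v \<in> space (PiM I M)" for v
  proof -
    have in_space: "v(c := y) \<in> space (PiM (insert c I) M)" if "y \<in> space (M c)" for y
      using v that by (auto simp: space_PiM PiE_def extensional_def)
    have "AE y in M c. indicator ?S (v(c := y)) = (0 :: ennreal)"
      using slices[OF v] AE_space
      by eventually_elim (use in_space in \<open>auto split: split_indicator\<close>)
    then show ?thesis by (simp add: nn_integral_cong_AE)
  qed
  have "emeasure (PiM (insert c I) M) ?S = (\<integral>\<^sup>+ v. indicator ?S v \<partial>PiM (insert c I) M)"
    using meas by simp
  also have "\<dots> = (\<integral>\<^sup>+ v. \<integral>\<^sup>+ y. indicator ?S (v(c := y)) \<partial>M c \<partial>PiM I M)"
    by (rule product_nn_integral_insert[OF assms(1,2)]) (use meas in simp)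
  also have "\<dots> = 0"
    by (simp add: slice_null cong: nn_integral_cong)
  finally show ?thesis using meas by (intro AE_I'[of ?S]) auto
qed

interpretation lborel_product: product_sigma_finite "\<lambda>_::nat. lborel :: real measure"
  by unfold_locales

lemma AE_preact_nonzero:
  assumes "l < mlp_depth ns" "i < ns ! Suc l"
  shows "AE w in PiM {..<num_params ns} (\<lambda>_. lborel). preact ns x w l i \<noteq> 0"
proof -
  let ?c = "bias_index ns l i"
  let ?I = "{..<num_params ns} - {?c}"
  have params: "{..<num_params ns} = insert ?c ?I"
    using bias_index_less_num_params[OF assms] by auto
  have "(\<lambda>w. preact ns x w l i) \<in> borel_measurable (PiM (insert ?c ?I) (\<lambda>_. lborel))"
    by (rule borel_measurable_preact[where X = "\<lambda>_. x"]) (simp_all add: measurable_PiM_coordinate)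
  then have "{w \<in> space (PiM (insert ?c ?I) (\<lambda>_. lborel)). \<not> preact ns x w l i \<noteq> 0}
      \<in> sets (PiM (insert ?c ?I) (\<lambda>_. lborel))"
    by measurable
  moreover have "AE y in lborel. preact ns x (v(?c := y)) l i \<noteq> 0" for v
    using AE_lborel_singleton[of "v ?c - preact ns x v l i"]
    by eventually_elim (simp del: preact.simps add: preact_fun_upd_bias[OF assms(2)])
  ultimately show ?thesis
    by (subst params) (rule lborel_product.AE_PiM_insert_by_slices; simp)
qed

definition hidden_units :: "nat list \<Rightarrow> (nat \<times> nat) set" where
  "hidden_units ns = (SIGMA l:{..<mlp_depth ns}. {..<ns ! Suc l})"

lemma finite_hidden_units: "finite (hidden_units ns)"
  by (simp add: hidden_units_def)

lemma AE_params_AE_input_preact_nonzero: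
  "AE w in PiM {..<num_params ns} (\<lambda>_. lborel). AE x in PiM {..<n} (\<lambda>_. lborel).
     \<forall>(l, i) \<in> hidden_units ns. preact ns x w l i \<noteq> 0"
proof -
  let ?Mx = "PiM {..<n} (\<lambda>_. lborel :: real measure)"
  let ?Mp = "PiM {..<num_params ns} (\<lambda>_. lborel :: real measure)"
  interpret pair_sigma_finite ?Mx ?Mp
    unfolding pair_sigma_finite_def by (simp add: lborel_product.sigma_finite)
  have "AE w in ?Mp. AE x in ?Mx. preact ns x w l i \<noteq> 0" if "(l, i) \<in> hidden_units ns" for l i
  proof -
    have "(\<lambda>z. preact ns (fst z) (snd z) l i) \<in> borel_measurable (?Mx \<Otimes>\<^sub>M ?Mp)"
      by (rule borel_measurable_preact)
        (auto intro: measurable_compose[OF measurable_fst measurable_PiM_coordinate]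
          measurable_compose[OF measurable_snd measurable_PiM_coordinate])
    then have "{z \<in> space (?Mx \<Otimes>\<^sub>M ?Mp). preact ns (fst z) (snd z) l i \<noteq> 0} \<in> sets (?Mx \<Otimes>\<^sub>M ?Mp)"
      by measurable
    moreover have "AE x in ?Mx. AE w in ?Mp. preact ns x w l i \<noteq> 0"
      using that AE_preact_nonzero by (simp add: hidden_units_def)
    ultimately show ?thesis by (simp add: AE_commute)
  qed
  then show ?thesis
    by (simp add: AE_finite_all finite_hidden_units split_beta)
qed

lemma act_eqI:
  assumes "\<And>l i. (l, i) \<in> hidden_units ns \<Longrightarrow> (preact ns x w l i > 0) = (preact ns x w' l i > 0)"
  shows "act ns x w = act ns x w'"
proof (intro ext)
  fix l i
  show "act ns x w l i = act ns x w' l i"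
  proof (cases "1 \<le> l \<and> l \<le> mlp_depth ns \<and> i < ns ! l")
    case True
    then have "(l - 1, i) \<in> hidden_units ns" by (auto simp: hidden_units_def)
    then show ?thesis using assms by (simp add: act_def)
  next
    case False
    then show ?thesis unfolding act_def by blast
  qed
qed

lemma eventually_act_eq:
  assumes "\<And>j. ((\<lambda>w. w j) \<longlongrightarrow> w0 j) F"
    and "\<And>l i. (l, i) \<in> hidden_units ns \<Longrightarrow> preact ns x w0 l i \<noteq> 0"
  shows "eventually (\<lambda>w. act ns x w = act ns x w0) F"
proof -
  have "eventually (\<lambda>w. (preact ns x w l i > 0) = (preact ns x w0 l i > 0)) F"
    if "(l, i) \<in> hidden_units ns" for l i
  proof (cases "preact ns x w0 l i > 0")
    case True
    with order_tendstoD(1)[OF tendsto_preact[OF assms(1)] True] show ?thesis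
      by (auto elim: eventually_mono)
  next
    case False
    then have "preact ns x w0 l i < 0" using assms(2)[OF that] by simp
    with order_tendstoD(2)[OF tendsto_preact[OF assms(1)] this] show ?thesis
      by (auto elim: eventually_mono)
  qed
  then have "eventually (\<lambda>w. \<forall>(l, i) \<in> hidden_units ns.
      (preact ns x w l i > 0) = (preact ns x w0 l i > 0)) F"
    by (intro eventually_ball_finite finite_hidden_units) auto
  then show ?thesis
    by eventually_elim (rule act_eqI, auto simp del: preact.simps)
qed

lemma norm_n_nonneg: "0 \<le> norm_n p v"
  by (simp add: norm_n_def sum_nonneg)

lemma abs_le_norm_n:
  assumes "j < p"
  shows "\<bar>v j\<bar> \<le> norm_n p v"
proof -
  have "\<bar>v j\<bar> = sqrt ((v j)\<^sup>2)" by simp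
  also have "\<dots> \<le> norm_n p v" unfolding norm_n_def
    by (intro real_sqrt_le_mono member_le_sum) (use assms in auto)
  finally show ?thesis .
qed

definition param_nhds :: "nat \<Rightarrow> (nat \<Rightarrow> real) \<Rightarrow> (nat \<Rightarrow> real) filter" where
  "param_nhds p w0 = filtercomap (\<lambda>w. norm_n p (\<lambda>i. w i - w0 i)) (nhds 0)
     \<sqinter> principal (space (PiM {..<p} (\<lambda>_. lborel :: real measure)))"

lemma eventually_param_nhds:
  "eventually P (param_nhds p w0) \<longleftrightarrow>
     (\<exists>\<epsilon>>0. \<forall>w \<in> space (PiM {..<p} (\<lambda>_. lborel :: real measure)).
        norm_n p (\<lambda>i. w i - w0 i) < \<epsilon> \<longrightarrow> P w)"
  unfolding param_nhds_def eventually_inf_principal eventually_filtercomap eventually_nhds_metric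
proof safe
  fix Q \<epsilon>
  assume "\<epsilon> > 0" "\<forall>r. dist r 0 < \<epsilon> \<longrightarrow> Q r"
    "\<forall>w. Q (norm_n p (\<lambda>i. w i - w0 i)) \<longrightarrow> w \<in> space (PiM {..<p} (\<lambda>_. lborel)) \<longrightarrow> P w"
  then show "\<exists>\<epsilon>>0. \<forall>w \<in> space (PiM {..<p} (\<lambda>_. lborel)). norm_n p (\<lambda>i. w i - w0 i) < \<epsilon> \<longrightarrow> P w"
    by (auto simp: dist_real_def norm_n_nonneg)
next
  fix \<epsilon> :: real
  assume "\<epsilon> > 0" "\<forall>w \<in> space (PiM {..<p} (\<lambda>_. lborel)). norm_n p (\<lambda>i. w i - w0 i) < \<epsilon> \<longrightarrow> P w"
  then show "\<exists>Q. (\<exists>d>0. \<forall>r. dist r 0 < d \<longrightarrow> Q r) \<and>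
      (\<forall>w. Q (norm_n p (\<lambda>i. w i - w0 i)) \<longrightarrow> w \<in> space (PiM {..<p} (\<lambda>_. lborel)) \<longrightarrow> P w)"
    by (intro exI[of _ "\<lambda>r. r < \<epsilon>"]) (auto simp: dist_real_def)
qed

lemma tendsto_coordinate_param_nhds:
  assumes "w0 \<in> space (PiM {..<p} (\<lambda>_. lborel :: real measure))"
  shows "((\<lambda>w. w j) \<longlongrightarrow> w0 j) (param_nhds p w0)"
proof (rule tendstoI)
  fix e :: real
  assume "e > 0"
  have "dist (w j) (w0 j) < e"
    if "w \<in> space (PiM {..<p} (\<lambda>_. lborel))" "norm_n p (\<lambda>i. w i - w0 i) < e" for w
  proof (cases "j < p")
    case True
    then show ?thesis using abs_le_norm_n[OF True, of "\<lambda>i. w i - w0 i"] that(2)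
      by (simp add: dist_real_def)
  next
    case False
    then show ?thesis using that(1) assms \<open>e > 0\<close>
      by (simp add: space_PiM PiE_def extensional_def)
  qed
  then show "eventually (\<lambda>w. dist (w j) (w0 j) < e) (param_nhds p w0)"
    using \<open>e > 0\<close> by (auto simp: eventually_param_nhds)
qed

theorem proposition1:
  fixes ns :: "nat list"
  assumes "length ns \<ge> 3"
  shows "\<exists>B. B \<subseteq> space (lebesgue_n (num_params ns)) \<and>
           B \<in> null_sets (lebesgue_n (num_params ns)) \<and>
           (\<forall>w0 \<in> space (lebesgue_n (num_params ns)) - B.
              \<exists>Z. Z \<subseteq> space (lebesgue_n (ns ! 0)) \<and>
                  Z \<in> null_sets (lebesgue_n (ns ! 0)) \<and>
                  (\<forall>x \<in> space (lebesgue_n (ns ! 0)) - Z.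
                     \<exists>\<epsilon>>0. \<forall>w \<in> space (lebesgue_n (num_params ns)).
                        norm_n (num_params ns) (\<lambda>i. w i - w0 i) < \<epsilon> \<longrightarrow>
                        act ns x w = act ns x w0))"
proof -
  let ?p = "num_params ns" and ?n = "ns ! 0"
  let ?generic = "\<lambda>w x. \<forall>(l, i) \<in> hidden_units ns. preact ns x w l i \<noteq> 0"
  define B where "B = {w \<in> space (lebesgue_n ?p). \<not> (AE x in lebesgue_n ?n. ?generic w x)}"
  have B_null: "B \<in> null_sets (lebesgue_n ?p)"
    unfolding B_def lebesgue_n_def completion.AE_iff_null_sets[symmetric] AE_completion_iff
    by (rule AE_params_AE_input_preact_nonzero)
  show ?thesis
  proof (rule exI[of _ B], intro conjI ballI B_null)
    fix w0
    assume w0: "w0 \<in> space (lebesgue_n ?p) - B"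
    define Z where "Z = {x \<in> space (lebesgue_n ?n). \<not> ?generic w0 x}"
    show "\<exists>Z. Z \<subseteq> space (lebesgue_n ?n) \<and> Z \<in> null_sets (lebesgue_n ?n) \<and>
        (\<forall>x \<in> space (lebesgue_n ?n) - Z. \<exists>\<epsilon>>0. \<forall>w \<in> space (lebesgue_n ?p).
           norm_n ?p (\<lambda>i. w i - w0 i) < \<epsilon> \<longrightarrow> act ns x w = act ns x w0)"
    proof (rule exI[of _ Z], intro conjI ballI)
      show "Z \<subseteq> space (lebesgue_n ?n)"
        by (simp add: Z_def)
      show "Z \<in> null_sets (lebesgue_n ?n)"
        using w0 unfolding Z_def B_def lebesgue_n_def completion.AE_iff_null_sets[symmetric]
        by blast
      fix x
      assume "x \<in> space (lebesgue_n ?n) - Z"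
      then have "eventually (\<lambda>w. act ns x w = act ns x w0) (param_nhds ?p w0)"
        using w0 by (intro eventually_act_eq tendsto_coordinate_param_nhds)
          (auto simp: Z_def lebesgue_n_def simp del: preact.simps)
      then show "\<exists>\<epsilon>>0. \<forall>w \<in> space (lebesgue_n ?p).
          norm_n ?p (\<lambda>i. w i - w0 i) < \<epsilon> \<longrightarrow> act ns x w = act ns x w0"
        by (simp add: eventually_param_nhds lebesgue_n_def)
    qed
  qed (simp add: B_def)
qed

end
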